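(* Let $\mathcal{A}=\langle\Sigma\times K, S, S_0, \Delta, S_F\rangle$ be an NFA over $\Sigma\times K$ with $K=\{1,\dots,k\}$. For any $w\in\Sigma^*$, $m\in K$, $i,j\in\mathbb{N}$, $s\in S^m_{w[i..j]}$, $i'\in\{i+1,i+2,\dots,i+\Delta^m_{\mathrm{KMP}}(s)-1\}$, and $j'\ge i'$, we have $w[i'..j']\notin\pi_m(\mathcal{L}(\mathcal{A}))$.
   Context: $\mathcal{L}(\cdot)$ denotes the language of an NFA. For $\tilde w\in(\Sigma\times K)^*$ and $x\in K$, $\pi_x(\tilde w)\in\Sigma^*$ deletes the letters $(a,x')$ with $x'\ne x$ and replaces each remaining $(a,x)$ by $a$; $\pi_x(L)=\{\pi_x(\tilde w)\mid\tilde w\in L\}$. For $w=\sigma_1\cdots\sigma_n$, $w[i..j]=\sigma_i\cdots\sigma_j$. For $s\in S$, $\mathcal{A}_s=\langle\Sigma\times K,S,S_0,\Delta,\{s\}\rangle$. For $m\in K$, $s\in S$: $\Delta^m_{\mathrm{KMP}}(s)=\min\{n\in\mathbb{N}_{+}\mid (\pi_m(\mathcal{L}(\mathcal{A}_s))\cdot\Sigma^* )\cap(\Sigma^n\cdot\pi_m(\mathcal{L}(\mathcal{A}))\cdot\Sigma^* )\neq\emptyset\}$. For $v\in\Sigma^*$ and $m\in K$, $S^m_v=\{s\in S\mid v\in\pi_m(\mathcal{L}(\mathcal{A}_s))\}$. *)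

theory Defs
  imports Main "HOL-Library.Extended_Nat"
begin

text \<open>An NFA over the alphabet Sigma x K, K = {1..k}: letters have type 'a \<times> nat
  (Sigma is the type 'a), states have type 's. The transition relation is a set of
  triples (p, letter, q).\<close>

definition is_nfa :: "nat \<Rightarrow> 's set \<Rightarrow> 's set \<Rightarrow> ('s \<times> ('a \<times> nat) \<times> 's) set \<Rightarrow> 's set \<Rightarrow> bool" where
  "is_nfa k S S0 Delta SF \<longleftrightarrow> finite S \<and> S0 \<subseteq> S \<and> SF \<subseteq> S \<and>
     Delta \<subseteq> S \<times> (UNIV \<times> {1..k}) \<times> S"

definition steps :: "('s \<times> 'b \<times> 's) set \<Rightarrow> 's set \<Rightarrow> 'b list \<Rightarrow> 's set" where
  "steps Delta P w = foldl (\<lambda>Q a. {q. \<exists>p\<in>Q. (p, a, q) \<in> Delta}) P w"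

definition nfa_lang :: "nat \<Rightarrow> 's set \<Rightarrow> ('s \<times> ('a \<times> nat) \<times> 's) set \<Rightarrow> 's set \<Rightarrow> ('a \<times> nat) list set" where
  "nfa_lang k S0 Delta SF = {w. w \<in> lists (UNIV \<times> {1..k}) \<and> steps Delta S0 w \<inter> SF \<noteq> {}}"

definition proj :: "nat \<Rightarrow> ('a \<times> nat) list \<Rightarrow> 'a list" where
  "proj x w = map fst (filter (\<lambda>(a, y). y = x) w)"

text \<open>w[i..j] with 1-based indices: sigma_i ... sigma_j (empty if j < i).\<close>
definition subword :: "'a list \<Rightarrow> nat \<Rightarrow> nat \<Rightarrow> 'a list" where
  "subword w i j = take (Suc j - i) (drop (i - 1) w)"

definition kmp_set :: "nat \<Rightarrow> 's set \<Rightarrow> ('s \<times> ('a \<times> nat) \<times> 's) set \<Rightarrow> 's set \<Rightarrow> nat \<Rightarrow> 's \<Rightarrow> nat set" where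
  "kmp_set k S0 Delta SF m s = {n. n > 0 \<and> (\<exists>u.
      (\<exists>v \<in> proj m ` nfa_lang k S0 Delta {s}. \<exists>t. u = v @ t) \<and>
      (\<exists>x \<in> proj m ` nfa_lang k S0 Delta SF. \<exists>p t. length p = n \<and> u = p @ x @ t))}"

definition delta_kmp :: "nat \<Rightarrow> 's set \<Rightarrow> ('s \<times> ('a \<times> nat) \<times> 's) set \<Rightarrow> 's set \<Rightarrow> nat \<Rightarrow> 's \<Rightarrow> enat" where
  "delta_kmp k S0 Delta SF m s =
     (if kmp_set k S0 Delta SF m s = {} then \<infinity> else enat (Least (\<lambda>n. n \<in> kmp_set k S0 Delta SF m s)))"

definition state_set :: "nat \<Rightarrow> 's set \<Rightarrow> 's set \<Rightarrow> ('s \<times> ('a \<times> nat) \<times> 's) set \<Rightarrow> nat \<Rightarrow> 'a list \<Rightarrow> 's set" where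
  "state_set k S S0 Delta m v = {s \<in> S. v \<in> proj m ` nfa_lang k S0 Delta {s}}"

end

theory Submission
  imports Defs
begin

text \<open>If \<open>w[i'..j']\<close> were accepted, then \<open>w[i..]\<close> would start with the word \<open>w[i..j]\<close> read into
  \<open>s\<close> and contain an accepted word at offset \<open>i' - i\<close>, so \<open>i' - i\<close> itself would be a candidate
  in the minimum defining \<open>\<Delta>\<^sup>m\<^sub>K\<^sub>M\<^sub>P(s)\<close>.\<close>

lemma kmp_setI:
  assumes "v \<in> proj m ` nfa_lang k S0 Delta {s}" and "x \<in> proj m ` nfa_lang k S0 Delta SF"
    and "u = v @ t" and "u = p @ x @ t'" and "p \<noteq> []"
  shows "length p \<in> kmp_set k S0 Delta SF m s"
  using assms unfolding kmp_set_def by blast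

lemma delta_kmp_le:
  assumes "n \<in> kmp_set k S0 Delta SF m s"
  shows "delta_kmp k S0 Delta SF m s \<le> enat n"
  using assms Least_le[of "\<lambda>n. n \<in> kmp_set k S0 Delta SF m s" n]
  unfolding delta_kmp_def by auto

lemma drop_eq_subword_append: "\<exists>t. drop (i - 1) w = subword w i j @ t"
  unfolding subword_def by (metis append_take_drop_id)

lemma drop_eq_offset_subword_append:
  assumes "1 \<le> i" and "i \<le> i'" and "i' \<le> Suc (length w)"
  shows "\<exists>p t. length p = i' - i \<and> drop (i - 1) w = p @ subword w i' j' @ t"
proof -
  let ?u = "drop (i - 1) w"
  have "drop (i' - i) ?u = drop (i' - 1) w"
    using assms by simp
  moreover obtain t where "drop (i' - 1) w = subword w i' j' @ t"
    using drop_eq_subword_append by blast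
  ultimately have "?u = take (i' - i) ?u @ subword w i' j' @ t"
    by (metis append_take_drop_id)
  moreover have "length (take (i' - i) ?u) = i' - i"
    using assms by simp
  ultimately show ?thesis by blast
qed

theorem lemma1:
  fixes k :: nat and S S0 SF :: "'s set" and Delta :: "('s \<times> ('a \<times> nat) \<times> 's) set"
    and w :: "'a list" and m i j i' j' :: nat and s :: 's
  assumes "is_nfa k S S0 Delta SF"
    and "m \<in> {1..k}"
    and "1 \<le> i" and "j \<le> length w" and "j' \<le> length w"
    and "s \<in> state_set k S S0 Delta m (subword w i j)"
    and "i < i'" and "enat (i' - i) < delta_kmp k S0 Delta SF m s"
    and "i' \<le> j'"
  shows "subword w i' j' \<notin> proj m ` nfa_lang k S0 Delta SF"
proof
  assume accepted: "subword w i' j' \<in> proj m ` nfa_lang k S0 Delta SF"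
  have read_into_s: "subword w i j \<in> proj m ` nfa_lang k S0 Delta {s}"
    using assms(6) by (simp add: state_set_def)
  obtain t where prefix: "drop (i - 1) w = subword w i j @ t"
    using drop_eq_subword_append by blast
  obtain p t' where "length p = i' - i" and occurrence: "drop (i - 1) w = p @ subword w i' j' @ t'"
    using drop_eq_offset_subword_append[of i i' w j'] assms by auto
  moreover have "p \<noteq> []"
    using \<open>length p = i' - i\<close> \<open>i < i'\<close> by auto
  ultimately have "i' - i \<in> kmp_set k S0 Delta SF m s"
    using kmp_setI[OF read_into_s accepted prefix occurrence] by simp
  then show False
    using delta_kmp_le assms(8) by (metis leD)
qed

end
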